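(* Let $n\ge3$ and $0<q<1$. For every relationship network $G$ on $V$ satisfying structural balance, the duples mechanism selects a needy agent with probability $$P_D(G)\ \ge\ q+q(1-q)\,\frac{3n-8}{8(n-1)}.$$
   Context: A relationship network $G$ on $V=\{1,\dots,n\}$ assigns to every unordered pair of distinct agents exactly one of the symmetric relations friends, enemies, impartial; $F_j,E_j,I_j$ are the friends, enemies, impartials of $j$. Structural balance: for all pairwise distinct $i,j,k$: $j\in F_i,k\in F_j\Rightarrow k\in F_i$; $j\in E_i,k\in E_j\Rightarrow k\in F_i$; $j\in E_i,k\in F_j\Rightarrow k\in E_i$. Each agent is needy independently with probability $q$; $N$ is the random needy set; every agent $j$ reports truthfully $(N,F_j,E_j)$. Duples mechanism $g^D$: for agent $l$ and $j\ne l$, $\mathrm{lev}_l(j)=1,\dots,6$ according as $j\in F_l\cap N$, $F_l\setminus N$, $I_l\cap N$, $I_l\setminus N$, $E_l\cap N$, $E_l\setminus N$. For distinct $j,k$, agent $l\notin\{j,k\}$ votes for $j$ against $k$ if $\mathrm{lev}_l(j)<\mathrm{lev}_l(k)$ (abstains if equal); $x_{jk}$ counts these votes. $g^D_j(\{j,k\})=1,\tfrac12,0$ as $x_{jk}>,=,<x_{kj}$, $g^D_k(\{j,k\})=1-g^D_j(\{j,k\})$, and $g^D_i=\frac{2}{n(n-1)}\sum_{j\ne i}g^D_i(\{i,j\})$. $P_D(G)=\mathbb E[\sum_{i\in N}g^D_i]$ under truthful reports. *)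

theory Defs
  imports Complex_Main
begin

datatype relation = Friends | Enemies | Impartial

text \<open>Agents are V = {1..n}; a relationship network is a function r assigning to every
  pair of agents a relation, required to be symmetric on distinct pairs
  (values on the diagonal are irrelevant).  j is a friend of i iff r i j = Friends, etc.\<close>

definition agents :: "nat \<Rightarrow> nat set" where
  "agents n = {1..n}"

definition rel_network :: "nat \<Rightarrow> (nat \<Rightarrow> nat \<Rightarrow> relation) \<Rightarrow> bool" where
  "rel_network n r \<longleftrightarrow> (\<forall>i\<in>agents n. \<forall>j\<in>agents n. i \<noteq> j \<longrightarrow> r i j = r j i)"

definition structurally_balanced :: "nat \<Rightarrow> (nat \<Rightarrow> nat \<Rightarrow> relation) \<Rightarrow> bool" where
  "structurally_balanced n r \<longleftrightarrow>
     (\<forall>i\<in>agents n. \<forall>j\<in>agents n. \<forall>k\<in>agents n. i \<noteq> j \<and> j \<noteq> k \<and> i \<noteq> k \<longrightarrow>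
        (r i j = Friends \<and> r j k = Friends \<longrightarrow> r i k = Friends) \<and>
        (r i j = Enemies \<and> r j k = Enemies \<longrightarrow> r i k = Friends) \<and>
        (r i j = Enemies \<and> r j k = Friends \<longrightarrow> r i k = Enemies))"

definition lev :: "(nat \<Rightarrow> nat \<Rightarrow> relation) \<Rightarrow> nat set \<Rightarrow> nat \<Rightarrow> nat \<Rightarrow> nat" where
  "lev r N l j = (case r l j of
      Friends \<Rightarrow> (if j \<in> N then 1 else 2)
    | Impartial \<Rightarrow> (if j \<in> N then 3 else 4)
    | Enemies \<Rightarrow> (if j \<in> N then 5 else 6))"

text \<open>x_{jk}: number of agents l outside {j,k} voting for j against k.\<close>
definition votes :: "nat \<Rightarrow> (nat \<Rightarrow> nat \<Rightarrow> relation) \<Rightarrow> nat set \<Rightarrow> nat \<Rightarrow> nat \<Rightarrow> nat" where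
  "votes n r N j k = card {l \<in> agents n - {j, k}. lev r N l j < lev r N l k}"

definition duple_share :: "nat \<Rightarrow> (nat \<Rightarrow> nat \<Rightarrow> relation) \<Rightarrow> nat set \<Rightarrow> nat \<Rightarrow> nat \<Rightarrow> real" where
  "duple_share n r N j k =
     (if votes n r N j k > votes n r N k j then 1
      else if votes n r N j k = votes n r N k j then 1/2 else 0)"

definition duples :: "nat \<Rightarrow> (nat \<Rightarrow> nat \<Rightarrow> relation) \<Rightarrow> nat set \<Rightarrow> nat \<Rightarrow> real" where
  "duples n r N i = 2 / (real n * (real n - 1)) * (\<Sum>j\<in>agents n - {i}. duple_share n r N i j)"

text \<open>P_D(G): expected probability that a needy agent is selected, each agent needy
  independently with probability q.\<close>
definition P_D :: "nat \<Rightarrow> real \<Rightarrow> (nat \<Rightarrow> nat \<Rightarrow> relation) \<Rightarrow> real" where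
  "P_D n q r = (\<Sum>N\<in>Pow (agents n).
      q ^ card N * (1 - q) ^ (n - card N) * (\<Sum>i\<in>N. duples n r N i))"

end

theory Submission
  imports Defs "HOL-Analysis.Convex"
begin

text \<open>Only the needs of its two agents influence a duple, so P_D is an average over ordered pairs
  \<open>(i, j)\<close> of distinct agents. If both are needy, the shares of the pair and its reverse add up
  to one. If only \<open>i\<close> is needy, \<open>i\<close> wins unless at least half of the other agents strictly
  prefer \<open>j\<close>; call the pair contested if this happens in one of the two directions. The shares of
  a contested pair and its reverse still add up to at least one, those of the other pairs to two.
  Structural balance leaves at most \<open>5n\<^sup>2/8\<close> contested pairs: if the friend class \<open>A\<close> of some
  agent \<open>a\<close> has at least \<open>n/2\<close> members, every contested pair is cut by \<open>A\<close> or, outside \<open>A\<close>,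
  by the enemies of \<open>a\<close>, and two such cuts have at most \<open>5n\<^sup>2/8\<close> pairs; otherwise contested
  pairs are impartial and triangle-free, so Mantel's theorem bounds them by \<open>n\<^sup>2/2\<close>.\<close>

definition bernoulli_weight :: "real \<Rightarrow> 'a set \<Rightarrow> 'a set \<Rightarrow> real" where
  "bernoulli_weight q A N = q ^ card N * (1 - q) ^ (card A - card N)"

lemma sum_Pow_insert_bernoulli_weight:
  assumes "finite W" "x \<notin> W"
  shows "(\<Sum>N\<in>Pow (insert x W). bernoulli_weight q (insert x W) N * F N) =
           q * (\<Sum>M\<in>Pow W. bernoulli_weight q W M * F (insert x M))
         + (1 - q) * (\<Sum>M\<in>Pow W. bernoulli_weight q W M * F M)"
proof -
  have weight_in: "bernoulli_weight q (insert x W) (insert x M) = q * bernoulli_weight q W M"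
    and weight_out: "bernoulli_weight q (insert x W) M = (1 - q) * bernoulli_weight q W M"
    if "M \<in> Pow W" for M
  proof -
    have "finite M" "x \<notin> M" "card M \<le> card W"
      using that assms finite_subset card_mono by auto
    then show "bernoulli_weight q (insert x W) (insert x M) = q * bernoulli_weight q W M"
      and "bernoulli_weight q (insert x W) M = (1 - q) * bernoulli_weight q W M"
      using assms by (simp_all add: bernoulli_weight_def Suc_diff_le)
  qed
  have "inj_on (insert x) (Pow W)"
    using assms(2) by (intro inj_onI) (metis PowD insert_ident subsetD)
  moreover have "Pow W \<inter> insert x ` Pow W = {}"
    using assms(2) by auto
  ultimately have "(\<Sum>N\<in>Pow (insert x W). bernoulli_weight q (insert x W) N * F N) =
      (\<Sum>M\<in>Pow W. bernoulli_weight q (insert x W) (insert x M) * F (insert x M))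
    + (\<Sum>M\<in>Pow W. bernoulli_weight q (insert x W) M * F M)"
    using assms(1) by (simp add: Pow_insert sum.union_disjoint sum.reindex add.commute)
  also have "\<dots> = q * (\<Sum>M\<in>Pow W. bernoulli_weight q W M * F (insert x M))
         + (1 - q) * (\<Sum>M\<in>Pow W. bernoulli_weight q W M * F M)"
    unfolding sum_distrib_left
    by (intro arg_cong2[where f="(+)"] sum.cong) (simp_all add: weight_in weight_out)
  finally show ?thesis .
qed

lemma sum_Pow_bernoulli_weight_Int:
  assumes "finite V" "U \<subseteq> V"
  shows "(\<Sum>N\<in>Pow V. bernoulli_weight q V N * G (N \<inter> U)) = (\<Sum>M\<in>Pow U. bernoulli_weight q U M * G M)"
proof -
  have "finite U"
    using assms finite_subset by blast
  have "(\<Sum>N\<in>Pow (U \<union> D). bernoulli_weight q (U \<union> D) N * G (N \<inter> U)) =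
        (\<Sum>M\<in>Pow U. bernoulli_weight q U M * G M)" if "finite D" "D \<inter> U = {}" for D
    using that
  proof (induction D rule: finite_induct)
    case empty
    show ?case
      by (intro sum.cong) (auto simp: Int_absorb2)
  next
    case (insert x D)
    have "U \<union> insert x D = insert x (U \<union> D)" "x \<notin> U \<union> D" "finite (U \<union> D)"
      using insert \<open>finite U\<close> by auto
    moreover have "insert x M \<inter> U = M \<inter> U" for M
      using insert.prems by auto
    ultimately show ?case
      using insert by (simp add: sum_Pow_insert_bernoulli_weight flip: distrib_right)
  qed
  moreover have "U \<union> (V - U) = V" "finite (V - U)" "(V - U) \<inter> U = {}"
    using assms by auto
  ultimately show ?thesis
    by metis
qed

lemma sum_Pow_doubleton_bernoulli_weight:
  assumes "i \<noteq> j"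
  shows "(\<Sum>M\<in>Pow {i, j}. bernoulli_weight q {i, j} M * G M) =
           q\<^sup>2 * G {i, j} + q * (1 - q) * (G {i} + G {j}) + (1 - q)\<^sup>2 * G {}"
proof -
  have singleton: "(\<Sum>M\<in>Pow {j}. bernoulli_weight q {j} M * H M) = q * H {j} + (1 - q) * H {}" for H
    using sum_Pow_insert_bernoulli_weight[of "{}" j q H] by (simp add: bernoulli_weight_def)
  have "(\<Sum>M\<in>Pow (insert i {j}). bernoulli_weight q (insert i {j}) M * G M) =
          q * (\<Sum>M\<in>Pow {j}. bernoulli_weight q {j} M * G (insert i M))
        + (1 - q) * (\<Sum>M\<in>Pow {j}. bernoulli_weight q {j} M * G M)"
    by (rule sum_Pow_insert_bernoulli_weight) (use assms in auto)
  also have "\<dots> = q * (q * G {i, j} + (1 - q) * G {i}) + (1 - q) * (q * G {j} + (1 - q) * G {})"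
    unfolding singleton by simp
  finally show ?thesis
    by (simp add: power2_eq_square algebra_simps)
qed

definition rank :: "relation \<Rightarrow> nat" where
  "rank x = (case x of Friends \<Rightarrow> 0 | Impartial \<Rightarrow> 1 | Enemies \<Rightarrow> 2)"

lemma lev_eq_rank: "lev r N l j = 2 * rank (r l j) + (if j \<in> N then 1 else 2)"
  by (cases "r l j") (auto simp: lev_def rank_def)

lemma votes_Int: "votes n r (N \<inter> {j, k}) j k = votes n r N j k"
  unfolding votes_def lev_eq_rank by simp

lemma duple_share_Int: "duple_share n r (N \<inter> {j, k}) j k = duple_share n r N j k"
  using votes_Int[of n r N j k] votes_Int[of n r N k j]
  by (simp add: duple_share_def insert_commute)

lemma duple_share_swap: "duple_share n r N j k + duple_share n r N k j = 1"
  unfolding duple_share_def by auto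

definition distinct_pairs :: "nat \<Rightarrow> (nat \<times> nat) set" where
  "distinct_pairs n = {(i, j). i \<in> agents n \<and> j \<in> agents n \<and> i \<noteq> j}"

lemma distinct_pairs_eq_Sigma: "distinct_pairs n = Sigma (agents n) (\<lambda>i. agents n - {i})"
  unfolding distinct_pairs_def by auto

lemma finite_agents: "finite (agents n)" and card_agents: "card (agents n) = n"
  by (simp_all add: agents_def)

lemma finite_distinct_pairs: "finite (distinct_pairs n)"
  unfolding distinct_pairs_eq_Sigma using finite_agents by blast

lemma card_distinct_pairs: "card (distinct_pairs n) = n * (n - 1)"
  unfolding distinct_pairs_eq_Sigma
  by (simp add: card_SigmaI finite_agents card_agents card_Diff_singleton)

lemma sum_distinct_pairs_swap:
  "(\<Sum>(i, j)\<in>distinct_pairs n. f i j) = (\<Sum>(i, j)\<in>distinct_pairs n. f j i)"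
  by (rule sum.reindex_bij_witness[where i=prod.swap and j=prod.swap]) (auto simp: distinct_pairs_def)

lemma P_D_eq_sum_distinct_pairs:
  "P_D n q r = 2 / (real n * (real n - 1)) * (\<Sum>(i, j)\<in>distinct_pairs n.
      q\<^sup>2 * duple_share n r {i, j} i j + q * (1 - q) * duple_share n r {i} i j)"
proof -
  define c where "c = 2 / (real n * (real n - 1))"
  define G where "G i j S = (if i \<in> S then duple_share n r S i j else 0)" for i j S
  have needy_sum: "(\<Sum>i\<in>N. duples n r N i) = c * (\<Sum>(i, j)\<in>distinct_pairs n. G i j (N \<inter> {i, j}))"
    if "N \<subseteq> agents n" for N
  proof -
    have "(\<Sum>i\<in>N. duples n r N i) = (\<Sum>i\<in>agents n. if i \<in> N then duples n r N i else 0)"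
      using that finite_agents by (simp add: sum.If_cases Int_absorb1)
    also have "\<dots> = c * (\<Sum>i\<in>agents n. \<Sum>j\<in>agents n - {i}. G i j N)"
      unfolding duples_def c_def G_def sum_distrib_left by (intro sum.cong) auto
    also have "\<dots> = c * (\<Sum>(i, j)\<in>distinct_pairs n. G i j (N \<inter> {i, j}))"
      unfolding distinct_pairs_eq_Sigma G_def duple_share_Int
      by (simp add: sum.Sigma finite_agents)
    finally show ?thesis .
  qed
  have pair_marginal: "(\<Sum>N\<in>Pow (agents n). bernoulli_weight q (agents n) N * G i j (N \<inter> {i, j})) =
      q\<^sup>2 * duple_share n r {i, j} i j + q * (1 - q) * duple_share n r {i} i j"
    if "(i, j) \<in> distinct_pairs n" for i j
  proof -
    have "{i, j} \<subseteq> agents n" "i \<noteq> j"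
      using that by (auto simp: distinct_pairs_def)
    then show ?thesis
      unfolding sum_Pow_bernoulli_weight_Int[OF finite_agents \<open>{i, j} \<subseteq> agents n\<close>]
      by (simp add: sum_Pow_doubleton_bernoulli_weight G_def)
  qed
  have "P_D n q r = (\<Sum>N\<in>Pow (agents n). bernoulli_weight q (agents n) N * (\<Sum>i\<in>N. duples n r N i))"
    unfolding P_D_def bernoulli_weight_def card_agents ..
  also have "\<dots> = (\<Sum>N\<in>Pow (agents n). bernoulli_weight q (agents n) N *
      (c * (\<Sum>(i, j)\<in>distinct_pairs n. G i j (N \<inter> {i, j}))))"
    by (intro sum.cong refl) (simp add: needy_sum)
  also have "\<dots> = c * (\<Sum>(i, j)\<in>distinct_pairs n.
      \<Sum>N\<in>Pow (agents n). bernoulli_weight q (agents n) N * G i j (N \<inter> {i, j}))"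
    by (simp add: sum_distrib_left mult.left_commute sum.swap[of _ "Pow (agents n)"] split_def)
  also have "\<dots> = c * (\<Sum>(i, j)\<in>distinct_pairs n.
      q\<^sup>2 * duple_share n r {i, j} i j + q * (1 - q) * duple_share n r {i} i j)"
    by (intro arg_cong[where f="(*) c"] sum.cong) (auto simp: pair_marginal)
  finally show ?thesis
    unfolding c_def .
qed

lemma sum_distinct_pairs_symmetrize:
  fixes f :: "nat \<Rightarrow> nat \<Rightarrow> real"
  shows "2 * (\<Sum>(i, j)\<in>distinct_pairs n. f i j) = (\<Sum>(i, j)\<in>distinct_pairs n. f i j + f j i)"
  using sum_distinct_pairs_swap[of f n] by (simp add: split_def sum.distrib)

lemma sum_duple_share_doubleton:
  "(\<Sum>(i, j)\<in>distinct_pairs n. duple_share n r {i, j} i j) = real (card (distinct_pairs n)) / 2"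
  using sum_distinct_pairs_symmetrize[of "\<lambda>i j. duple_share n r {i, j} i j" n]
  by (simp add: insert_commute duple_share_swap)

definition supporters :: "nat \<Rightarrow> (nat \<Rightarrow> nat \<Rightarrow> relation) \<Rightarrow> nat \<Rightarrow> nat \<Rightarrow> nat set" where
  "supporters n r i j = {l \<in> agents n - {i, j}. rank (r l i) < rank (r l j)}"

lemma votes_singleton_against: "votes n r {i} j i = card (supporters n r j i)"
  unfolding votes_def supporters_def lev_eq_rank by (intro arg_cong[where f=card]) auto

text \<open>When exactly one agent of the duple is needy nobody abstains: the levels of the two
  agents differ in parity.\<close>

lemma votes_singleton_sum:
  assumes "i \<in> agents n" "j \<in> agents n" "i \<noteq> j"
  shows "votes n r {i} i j + votes n r {i} j i = n - 2"
proof -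
  let ?for = "{l \<in> agents n - {i, j}. lev r {i} l i < lev r {i} l j}"
  let ?against = "{l \<in> agents n - {j, i}. lev r {i} l j < lev r {i} l i}"
  have "lev r {i} l i < lev r {i} l j \<or> lev r {i} l j < lev r {i} l i" for l
    using assms(3) by (cases "r l i"; cases "r l j") (simp_all add: lev_def)
  then have "?for \<union> ?against = agents n - {i, j}"
    by auto
  moreover have "card (?for \<union> ?against) = card ?for + card ?against"
    by (rule card_Un_disjoint) (auto simp: finite_agents)
  moreover have "card (agents n - {i, j}) = n - 2"
    using assms by (simp add: card_Diff_subset finite_agents card_agents)
  ultimately show ?thesis
    unfolding votes_def by simp
qed

lemma card_supporters_add_le:
  assumes "i \<in> agents n" "j \<in> agents n" "i \<noteq> j"
  shows "card (supporters n r i j) + card (supporters n r j i) \<le> n - 2"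
proof -
  have "card (supporters n r i j) + card (supporters n r j i) = card (supporters n r i j \<union> supporters n r j i)"
    by (rule card_Un_disjoint[symmetric]) (auto simp: supporters_def finite_agents)
  also have "\<dots> \<le> card (agents n - {i, j})"
    by (rule card_mono) (auto simp: supporters_def finite_agents)
  also have "\<dots> = n - 2"
    using assms by (simp add: card_Diff_subset finite_agents card_agents)
  finally show ?thesis .
qed

text \<open>When \<open>i\<close> is the only needy agent of the duple \<open>{i, j}\<close>, the supporters of \<open>j\<close> vote
  against \<open>i\<close> and all other agents for it, so \<open>i\<close> wins unless it is outranked by \<open>j\<close>.\<close>

definition outranked :: "nat \<Rightarrow> (nat \<Rightarrow> nat \<Rightarrow> relation) \<Rightarrow> nat \<Rightarrow> nat \<Rightarrow> bool" where
  "outranked n r i j \<longleftrightarrow> n - 2 \<le> 2 * card (supporters n r j i)"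

definition contested_pairs :: "nat \<Rightarrow> (nat \<Rightarrow> nat \<Rightarrow> relation) \<Rightarrow> (nat \<times> nat) set" where
  "contested_pairs n r = {(i, j) \<in> distinct_pairs n. outranked n r i j \<or> outranked n r j i}"

lemma duple_share_singleton_pair_ge:
  assumes "i \<in> agents n" "j \<in> agents n" "i \<noteq> j"
  shows "duple_share n r {i} i j + duple_share n r {j} j i \<ge> 2 - of_bool ((i, j) \<in> contested_pairs n r)"
proof -
  have "votes n r {i} i j + card (supporters n r j i) = n - 2"
       "votes n r {j} j i + card (supporters n r i j) = n - 2"
    using votes_singleton_sum[OF assms] votes_singleton_sum[of j n i r] assms
    by (simp_all add: votes_singleton_against)
  moreover have "card (supporters n r i j) + card (supporters n r j i) \<le> n - 2"
    using card_supporters_add_le[OF assms] .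
  ultimately show ?thesis
    using assms
    by (auto simp: duple_share_def votes_singleton_against outranked_def contested_pairs_def
        distinct_pairs_def)
qed

lemma sum_duple_share_singleton_ge:
  "2 * (\<Sum>(i, j)\<in>distinct_pairs n. duple_share n r {i} i j)
     \<ge> 2 * real (card (distinct_pairs n)) - real (card (contested_pairs n r))"
proof -
  have "(\<Sum>(i, j)\<in>distinct_pairs n. 2 - of_bool ((i, j) \<in> contested_pairs n r))
      \<le> (\<Sum>(i, j)\<in>distinct_pairs n. duple_share n r {i} i j + duple_share n r {j} j i)"
  proof (intro sum_mono)
    fix p assume "p \<in> distinct_pairs n"
    then obtain i j where "p = (i, j)" "i \<in> agents n" "j \<in> agents n" "i \<noteq> j"
      by (auto simp: distinct_pairs_def)
    then show "(case p of (i, j) \<Rightarrow> 2 - of_bool ((i, j) \<in> contested_pairs n r))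
        \<le> (case p of (i, j) \<Rightarrow> duple_share n r {i} i j + duple_share n r {j} j i)"
      using duple_share_singleton_pair_ge by simp
  qed
  moreover have "(\<Sum>(i, j)\<in>distinct_pairs n. 2 - of_bool ((i, j) \<in> contested_pairs n r))
      = 2 * real (card (distinct_pairs n)) - real (card (contested_pairs n r))"
  proof -
    have "distinct_pairs n \<inter> {p. p \<in> contested_pairs n r} = contested_pairs n r"
      by (auto simp: contested_pairs_def)
    then show ?thesis
      by (simp add: split_def sum_subtractf finite_distinct_pairs)
  qed
  ultimately show ?thesis
    by (simp only: sum_distinct_pairs_symmetrize)
qed

text \<open>Mantel's theorem, for the symmetric relation of a triangle-free graph: the neighbourhoods of
  adjacent vertices are disjoint, so summing degrees over edges gives \<open>2 \<Sum> d\<^sup>2 \<le> |V| |S|\<close>,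
  and the root mean square inequality gives \<open>|S|\<^sup>2 \<le> |V| \<Sum> d\<^sup>2\<close>.\<close>

lemma card_triangle_free_le:
  fixes S :: "('a \<times> 'a) set"
  assumes "finite V" "S \<subseteq> V \<times> V" "sym S"
    and triangle_free: "\<And>u v w. (u, v) \<in> S \<Longrightarrow> (v, w) \<in> S \<Longrightarrow> (u, w) \<in> S \<Longrightarrow> False"
  shows "2 * card S \<le> (card V)\<^sup>2"
proof -
  define d where "d u = card (S `` {u})" for u
  have nbhd_sub: "S `` {u} \<subseteq> V" for u
    using assms(2) by auto
  have finite_nbhd: "finite (S `` {u})" for u
    using nbhd_sub assms(1) finite_subset by blast
  have S_Sigma: "S = Sigma V (\<lambda>u. S `` {u})"
    using assms(2) by auto
  have card_S: "card S = (\<Sum>u\<in>V. d u)"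
    by (subst S_Sigma) (simp add: card_SigmaI assms(1) finite_nbhd d_def)
  have edge_degrees: "d u + d v \<le> card V" if "(u, v) \<in> S" for u v
  proof -
    have "S `` {u} \<inter> S `` {v} = {}"
      using that triangle_free \<open>sym S\<close> by (auto dest: symD)
    then have "d u + d v = card (S `` {u} \<union> S `` {v})"
      by (simp add: d_def card_Un_disjoint finite_nbhd)
    also have "\<dots> \<le> card V"
      by (intro card_mono assms(1)) (use nbhd_sub in auto)
    finally show ?thesis .
  qed
  have "(\<Sum>(u, v)\<in>S. d v) = (\<Sum>(u, v)\<in>S. d u)"
    using \<open>sym S\<close> by (intro sum.reindex_bij_witness[where i=prod.swap and j=prod.swap]) (auto dest: symD)
  moreover have "(\<Sum>(u, v)\<in>S. d u) = (\<Sum>u\<in>V. d u * d u)"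
    by (subst S_Sigma) (simp add: sum.Sigma[symmetric] assms(1) finite_nbhd d_def)
  moreover have "(\<Sum>(u, v)\<in>S. d u + d v) \<le> (\<Sum>(u, v)\<in>S. card V)"
    by (intro sum_mono) (auto intro: edge_degrees)
  ultimately have "2 * (\<Sum>u\<in>V. d u * d u) \<le> card V * card S"
    by (simp add: sum.distrib split_def mult.commute)
  then have "real (2 * (\<Sum>u\<in>V. d u * d u)) \<le> real (card V * card S)"
    by (simp only: of_nat_le_iff)
  then have degree_squares: "2 * (\<Sum>u\<in>V. (real (d u))\<^sup>2) \<le> real (card V) * real (card S)"
    by (simp add: power2_eq_square)
  have "2 * (real (card S))\<^sup>2 \<le> 2 * ((\<Sum>u\<in>V. (real (d u))\<^sup>2) * real (card V))"
    using sum_squared_le_sum_of_squares[of "\<lambda>u. real (d u)" V] by (simp add: card_S)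
  also have "\<dots> \<le> real (card V) * (real (card V) * real (card S))"
    using mult_left_mono[OF degree_squares, of "real (card V)"] by (simp add: mult_ac)
  finally have "real (card S) * (2 * real (card S)) \<le> real (card S) * (real (card V))\<^sup>2"
    by (simp add: power2_eq_square mult_ac)
  then have "real (2 * card S) \<le> real ((card V)\<^sup>2)"
    by (cases "card S = 0") auto
  then show ?thesis
    by (simp only: of_nat_le_iff)
qed

definition cut_pairs :: "'a set \<Rightarrow> 'a set \<Rightarrow> ('a \<times> 'a) set" where
  "cut_pairs V A = A \<times> (V - A) \<union> (V - A) \<times> A"

lemma card_cut_pairs:
  assumes "finite V" "A \<subseteq> V"
  shows "card (cut_pairs V A) = 2 * (card A * (card V - card A))"
proof -
  have "finite A"
    using assms finite_subset by blast
  then have "card (cut_pairs V A) = card (A \<times> (V - A)) + card ((V - A) \<times> A)"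
    unfolding cut_pairs_def using assms(1) by (intro card_Un_disjoint) auto
  then show ?thesis
    using assms by (simp add: card_cartesian_product card_Diff_subset \<open>finite A\<close>)
qed

lemma two_cuts_bound:
  fixes a b n :: real
  assumes "n \<le> 2 * a" "0 \<le> b" "a + b \<le> n"
  shows "16 * (a * (n - a) + b * (n - a - b)) \<le> 5 * n\<^sup>2"
proof -
  have "5 * n\<^sup>2 - 16 * (a * (n - a) + b * (n - a - b))
      = (5 * n - 6 * (n - a)) * (n - 2 * (n - a)) + 4 * ((n - a) - 2 * b)\<^sup>2"
    by (simp add: power2_eq_square algebra_simps)
  moreover have "0 \<le> (5 * n - 6 * (n - a)) * (n - 2 * (n - a))"
    using assms by (intro mult_nonneg_nonneg) auto
  ultimately show ?thesis
    using zero_le_power2[of "(n - a) - 2 * b"] by linarith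
qed

definition friends :: "nat \<Rightarrow> (nat \<Rightarrow> nat \<Rightarrow> relation) \<Rightarrow> nat \<Rightarrow> nat set" where
  "friends n r x = {l \<in> agents n. l \<noteq> x \<and> r x l = Friends}"

definition enemies :: "nat \<Rightarrow> (nat \<Rightarrow> nat \<Rightarrow> relation) \<Rightarrow> nat \<Rightarrow> nat set" where
  "enemies n r x = {l \<in> agents n. l \<noteq> x \<and> r x l = Enemies}"

definition friend_class :: "nat \<Rightarrow> (nat \<Rightarrow> nat \<Rightarrow> relation) \<Rightarrow> nat \<Rightarrow> nat set" where
  "friend_class n r x = insert x (friends n r x)"

lemma card_friend_class: "card (friend_class n r x) = card (friends n r x) + 1"
  unfolding friend_class_def friends_def by (simp add: finite_agents)

locale balanced_network =
  fixes n :: nat and r :: "nat \<Rightarrow> nat \<Rightarrow> relation"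
  assumes rel_network: "rel_network n r"
    and balanced: "structurally_balanced n r"
begin

lemma rel_sym: "a \<in> agents n \<Longrightarrow> b \<in> agents n \<Longrightarrow> a \<noteq> b \<Longrightarrow> r a b = r b a"
  using rel_network unfolding rel_network_def by blast

lemma friends_trans:
  "\<lbrakk>a \<in> agents n; b \<in> agents n; c \<in> agents n; a \<noteq> b; b \<noteq> c; a \<noteq> c;
    r a b = Friends; r b c = Friends\<rbrakk> \<Longrightarrow> r a c = Friends"
  using balanced unfolding structurally_balanced_def by blast

lemma enemies_enemies_friends:
  "\<lbrakk>a \<in> agents n; b \<in> agents n; c \<in> agents n; a \<noteq> b; b \<noteq> c; a \<noteq> c;
    r a b = Enemies; r b c = Enemies\<rbrakk> \<Longrightarrow> r a c = Friends"
  using balanced unfolding structurally_balanced_def by blast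

lemma enemies_friends_enemies:
  "\<lbrakk>a \<in> agents n; b \<in> agents n; c \<in> agents n; a \<noteq> b; b \<noteq> c; a \<noteq> c;
    r a b = Enemies; r b c = Friends\<rbrakk> \<Longrightarrow> r a c = Enemies"
  using balanced unfolding structurally_balanced_def by blast

lemma supporters_subset:
  assumes "i \<in> agents n" "j \<in> agents n"
  shows "supporters n r j i \<subseteq> friends n r j \<union> enemies n r i"
proof
  fix l assume l: "l \<in> supporters n r j i"
  then have "r l j = Friends \<or> r l i = Enemies"
    by (cases "r l j"; cases "r l i") (auto simp: supporters_def rank_def)
  then show "l \<in> friends n r j \<union> enemies n r i"
    using l assms rel_sym[of l j] rel_sym[of l i] by (auto simp: supporters_def friends_def enemies_def)
qed

lemma supporters_of_friend:
  assumes "i \<in> agents n" "j \<in> agents n" "i \<noteq> j" "r i j = Friends"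
  shows "supporters n r j i = {}"
proof -
  have False if l: "l \<in> supporters n r j i" for l
  proof (cases "r l j")
    case Friends
    then have "r l i = Friends"
      using friends_trans[of l j i] rel_sym[of i j] assms l by (auto simp: supporters_def)
    with l Friends show False
      by (simp add: supporters_def rank_def)
  next
    case Impartial
    with l have "r l i = Enemies"
      by (cases "r l i") (auto simp: supporters_def rank_def)
    then have "r l j = Enemies"
      using enemies_friends_enemies[of l i j] assms l by (auto simp: supporters_def)
    with Impartial show False
      by simp
  next
    case Enemies
    with l show False
      by (cases "r l i") (auto simp: supporters_def rank_def)
  qed
  then show ?thesis
    by blast
qed

lemma supporters_of_enemy:
  assumes "i \<in> agents n" "j \<in> agents n" "i \<noteq> j" "r i j = Enemies"
  shows "supporters n r j i \<subseteq> friends n r j"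
proof
  fix l assume l: "l \<in> supporters n r j i"
  then have l_props: "l \<in> agents n" "l \<noteq> i" "l \<noteq> j"
    by (auto simp: supporters_def)
  from l assms(1,2) supporters_subset consider "l \<in> friends n r j" | "l \<in> enemies n r i"
    by blast
  then show "l \<in> friends n r j"
  proof cases
    case 2
    then have "r l i = Enemies"
      using rel_sym[of i l] assms l_props by (auto simp: enemies_def)
    then have "r l j = Friends"
      using enemies_enemies_friends[of l i j] assms l_props by auto
    then show ?thesis
      using rel_sym[of j l] assms l_props by (auto simp: friends_def)
  qed
qed


lemma outranked_not_friends:
  assumes "3 \<le> n" "i \<in> agents n" "j \<in> agents n" "i \<noteq> j" "outranked n r i j"
  shows "r i j \<noteq> Friends"
  using assms supporters_of_friend[of i j] by (auto simp: outranked_def)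

lemma friend_class_subset: "a \<in> agents n \<Longrightarrow> friend_class n r a \<subseteq> agents n"
  by (auto simp: friend_class_def friends_def)

lemma friend_class_friends:
  assumes "a \<in> agents n" "x \<in> friend_class n r a" "y \<in> friend_class n r a" "x \<noteq> y"
  shows "r x y = Friends"
  using assms friends_trans[of x a y] rel_sym[of x a]
  by (auto simp: friend_class_def friends_def)

lemma friend_of_friend_class:
  assumes "a \<in> agents n" "x \<in> friend_class n r a" "y \<in> friends n r x"
  shows "y \<in> friend_class n r a"
  using assms friends_trans[of a x y] by (auto simp: friend_class_def friends_def)

lemma enemy_of_friend_class:
  assumes "a \<in> agents n" "x \<in> friend_class n r a" "x \<in> enemies n r y" "y \<in> agents n"
  shows "y \<in> enemies n r a"
proof -
  have "y \<noteq> a"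
    using assms by (auto simp: friend_class_def friends_def enemies_def)
  have "r y a = Enemies"
  proof (cases "x = a")
    case False
    then have "r x a = Friends"
      using assms rel_sym[of x a] by (auto simp: friend_class_def friends_def)
    then show ?thesis
      using assms False \<open>y \<noteq> a\<close> enemies_friends_enemies[of y x a]
      by (auto simp: friend_class_def friends_def enemies_def)
  qed (use assms in \<open>auto simp: enemies_def\<close>)
  then show ?thesis
    using assms \<open>y \<noteq> a\<close> rel_sym[of y a] by (auto simp: enemies_def)
qed

lemma enemies_friends:
  assumes "a \<in> agents n" "x \<in> enemies n r a" "y \<in> enemies n r a" "x \<noteq> y"
  shows "r x y = Friends"
  using assms enemies_enemies_friends[of x a y] rel_sym[of x a]
  by (auto simp: enemies_def)



text \<open>If the friend class \<open>A\<close> of \<open>a\<close> holds at least half of the agents, every outranked pair is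
  separated either by \<open>A\<close>, or, outside \<open>A\<close>, by the enemies \<open>B\<close> of \<open>a\<close>: otherwise \<open>A\<close>,
  the pair and the supporters of the winner would be disjoint and too many.\<close>

lemma outranked_in_cut_pairs:
  assumes "3 \<le> n" "a \<in> agents n" "n \<le> 2 * card (friend_class n r a)"
    and ij: "i \<in> agents n" "j \<in> agents n" "i \<noteq> j" and "outranked n r i j"
  shows "(i, j) \<in> cut_pairs (agents n) (friend_class n r a)
                 \<union> cut_pairs (agents n - friend_class n r a) (enemies n r a)"
proof (rule ccontr)
  let ?A = "friend_class n r a" and ?B = "enemies n r a"
  have "?A \<inter> ?B = {}"
    by (auto simp: friend_class_def friends_def enemies_def)
  moreover assume "(i, j) \<notin> cut_pairs (agents n) ?A \<union> cut_pairs (agents n - ?A) ?B"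
  ultimately consider "i \<in> ?A" "j \<in> ?A" | "i \<in> ?B" "j \<in> ?B" | "i \<notin> ?A \<union> ?B" "j \<notin> ?A \<union> ?B"
    using ij by (auto simp: cut_pairs_def)
  then show False
  proof cases
    case 1
    then show False
      using friend_class_friends[OF assms(2) _ _ ij(3)] outranked_not_friends assms by blast
  next
    case 2
    then show False
      using enemies_friends[OF assms(2) _ _ ij(3)] outranked_not_friends assms by blast
  next
    case 3
    let ?S = "supporters n r j i"
    have "l \<notin> friends n r j" if "l \<in> ?A" for l
    proof
      assume "l \<in> friends n r j"
      then have "j \<in> friends n r l"
        using ij rel_sym[of j l] by (auto simp: friends_def)
      with 3 show False
        using friend_of_friend_class[OF assms(2) that] by blast
    qed
    moreover have "l \<notin> enemies n r i" if "l \<in> ?A" for l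
      using 3 ij enemy_of_friend_class[OF assms(2) that] by blast
    ultimately have "?A \<inter> ?S = {}"
      using supporters_subset[OF ij(1,2)] by blast
    moreover have "?A \<subseteq> agents n" "?S \<subseteq> agents n - {i, j}"
      using friend_class_subset[OF assms(2)] by (auto simp: supporters_def)
    ultimately have "(?A \<union> {i, j}) \<inter> ?S = {}" "?A \<inter> {i, j} = {}"
      using 3 by auto
    moreover have "finite ?A" "finite ?S"
      using \<open>?A \<subseteq> agents n\<close> finite_subset finite_agents by (auto simp: supporters_def)
    ultimately have "card (?A \<union> {i, j} \<union> ?S) = card ?A + card {i, j} + card ?S"
      by (simp only: card_Un_disjoint finite_Un finite.emptyI finite_insert)
    then have "card (?A \<union> {i, j} \<union> ?S) = card ?A + 2 + card ?S"
      using ij(3) by simp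
    moreover have "card (?A \<union> {i, j} \<union> ?S) \<le> n"
      using card_mono[OF finite_agents, of "?A \<union> {i, j} \<union> ?S" n] \<open>?A \<subseteq> agents n\<close>
        \<open>?S \<subseteq> agents n - {i, j}\<close> ij by (auto simp: card_agents)
    ultimately show False
      using assms(3) \<open>outranked n r i j\<close> by (simp add: outranked_def)
  qed
qed


lemma card_contested_pairs_le_large_class:
  assumes "3 \<le> n" "a \<in> agents n" "n \<le> 2 * card (friend_class n r a)"
  shows "8 * card (contested_pairs n r) \<le> 5 * n\<^sup>2"
proof -
  let ?V = "agents n" and ?A = "friend_class n r a" and ?B = "enemies n r a"
  let ?T = "cut_pairs ?V ?A \<union> cut_pairs (?V - ?A) ?B"
  have A_sub: "?A \<subseteq> ?V" and B_sub: "?B \<subseteq> ?V - ?A"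
    using friend_class_subset[OF assms(2)] by (auto simp: friend_class_def friends_def enemies_def)
  have card_A_le: "card ?A \<le> n" and card_AB_le: "card ?A + card ?B \<le> n"
    using card_mono[OF finite_agents A_sub] card_mono[OF finite_Diff B_sub]
      card_Diff_subset[OF finite_subset[OF A_sub finite_agents] A_sub]
    by (simp_all add: card_agents finite_agents)
  have "contested_pairs n r \<subseteq> ?T"
  proof
    fix p assume "p \<in> contested_pairs n r"
    then obtain i j where "p = (i, j)" "i \<in> ?V" "j \<in> ?V" "i \<noteq> j"
      "outranked n r i j \<or> outranked n r j i"
      by (auto simp: contested_pairs_def distinct_pairs_def)
    then show "p \<in> ?T"
      using outranked_in_cut_pairs[OF assms, of i j] outranked_in_cut_pairs[OF assms, of j i]
      by (auto simp: cut_pairs_def)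
  qed
  then have "card (contested_pairs n r) \<le> card ?T"
    using finite_subset[OF A_sub finite_agents] finite_subset[OF B_sub] finite_agents
    by (intro card_mono) (simp_all add: cut_pairs_def)
  also have "\<dots> \<le> card (cut_pairs ?V ?A) + card (cut_pairs (?V - ?A) ?B)"
    by (rule card_Un_le)
  also have "\<dots> = 2 * (card ?A * (n - card ?A)) + 2 * (card ?B * (n - card ?A - card ?B))"
    using A_sub B_sub card_Diff_subset[OF finite_subset[OF A_sub finite_agents] A_sub]
    by (simp add: card_cut_pairs finite_agents card_agents)
  finally have "real (card (contested_pairs n r))
      \<le> real (2 * (card ?A * (n - card ?A)) + 2 * (card ?B * (n - card ?A - card ?B)))"
    by (simp only: of_nat_le_iff)
  also have "\<dots> = 2 * (real (card ?A) * (real n - real (card ?A))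
                   + real (card ?B) * (real n - real (card ?A) - real (card ?B)))"
    using card_A_le card_AB_le by (simp add: of_nat_diff diff_diff_left)
  finally have "16 * real (card (contested_pairs n r))
      \<le> 2 * (16 * (real (card ?A) * (real n - real (card ?A))
                   + real (card ?B) * (real n - real (card ?A) - real (card ?B))))"
    by simp
  also have "\<dots> \<le> 2 * (5 * (real n)\<^sup>2)"
    using two_cuts_bound[of "real n" "real (card ?A)" "real (card ?B)"] assms(3) card_AB_le by simp
  finally have "real (8 * card (contested_pairs n r)) \<le> real (5 * n\<^sup>2)"
    by simp
  then show ?thesis
    by (simp only: of_nat_le_iff)
qed


lemma outranked_impartial:
  assumes "3 \<le> n" "\<And>x. x \<in> agents n \<Longrightarrow> 2 * card (friend_class n r x) < n"
    and ij: "i \<in> agents n" "j \<in> agents n" "i \<noteq> j" and "outranked n r i j"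
  shows "r i j = Impartial"
proof (cases "r i j")
  case Friends
  then show ?thesis
    using outranked_not_friends assms by blast
next
  case Enemies
  have "card (supporters n r j i) \<le> card (friends n r j)"
    using supporters_of_enemy[OF ij Enemies] by (intro card_mono) (auto simp: friends_def finite_agents)
  then show ?thesis
    using assms(2)[OF ij(2)] \<open>outranked n r i j\<close> by (simp add: outranked_def card_friend_class)
qed

text \<open>Among three pairwise impartial agents there is no outranked path \<open>x, y, z\<close>: the agents
  themselves and the supporters of \<open>y\<close> against \<open>x\<close> and of \<open>z\<close> against \<open>y\<close> would be disjoint
  and too many.\<close>

lemma no_outranked_path:
  assumes xyz: "x \<in> agents n" "y \<in> agents n" "z \<in> agents n" "x \<noteq> y" "y \<noteq> z" "x \<noteq> z"
    and impartial: "r x y = Impartial" "r y z = Impartial" "r x z = Impartial"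
    and "outranked n r x y" "outranked n r y z"
  shows False
proof -
  let ?S = "supporters n r y x" and ?S' = "supporters n r z y"
  have S: "?S \<subseteq> friends n r y \<union> enemies n r x" and S': "?S' \<subseteq> friends n r z \<union> enemies n r y"
    using supporters_subset xyz by blast+
  have "z \<notin> ?S"
    using S impartial by (auto simp: friends_def enemies_def)
  moreover have "x \<notin> ?S'"
    using S' impartial rel_sym[of x z] rel_sym[of x y] xyz by (auto simp: friends_def enemies_def)
  moreover have "?S \<inter> ?S' = {}"
  proof (intro equals0I)
    fix l assume l: "l \<in> ?S \<inter> ?S'"
    then have l_props: "l \<in> agents n" "l \<noteq> x" "l \<noteq> y" "l \<noteq> z"
      by (auto simp: supporters_def)
    consider "l \<in> friends n r y" "l \<in> friends n r z" | "l \<in> friends n r y" "l \<in> enemies n r y"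
      | "l \<in> enemies n r x" "l \<in> friends n r z" | "l \<in> enemies n r x" "l \<in> enemies n r y"
      using l S S' by blast
    then show False
    proof cases
      case 1
      then show False
        using friends_trans[of y l z] rel_sym[of z l] xyz l_props impartial by (auto simp: friends_def)
    next
      case 2
      then show False
        by (simp add: friends_def enemies_def)
    next
      case 3
      then show False
        using enemies_friends_enemies[of x l z] rel_sym[of z l] xyz l_props impartial
        by (auto simp: friends_def enemies_def)
    next
      case 4
      then show False
        using enemies_enemies_friends[of x l y] rel_sym[of y l] xyz l_props impartial
        by (auto simp: enemies_def)
    qed
  qed
  moreover have "?S \<subseteq> agents n - {x, y}" "?S' \<subseteq> agents n - {y, z}" "finite ?S" "finite ?S'"
    by (auto simp: supporters_def finite_agents)
  ultimately have "({x, y, z} \<union> ?S) \<inter> ?S' = {}" "{x, y, z} \<inter> ?S = {}" "finite ?S" "finite ?S'"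
    by auto
  then have "card ({x, y, z} \<union> ?S \<union> ?S') = card {x, y, z} + card ?S + card ?S'"
    by (simp only: card_Un_disjoint finite_Un finite.emptyI finite_insert)
  moreover have "card ({x, y, z} \<union> ?S \<union> ?S') \<le> n"
    using card_mono[OF finite_agents, of "{x, y, z} \<union> ?S \<union> ?S'" n] xyz
    by (auto simp: supporters_def card_agents)
  ultimately show False
    using xyz \<open>outranked n r x y\<close> \<open>outranked n r y z\<close> by (simp add: outranked_def)
qed

lemma card_contested_pairs_le_small_classes:
  assumes "3 \<le> n" "\<And>x. x \<in> agents n \<Longrightarrow> 2 * card (friend_class n r x) < n"
  shows "2 * card (contested_pairs n r) \<le> n\<^sup>2"
proof -
  let ?C = "contested_pairs n r"
  have "2 * card ?C \<le> (card (agents n))\<^sup>2"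
  proof (rule card_triangle_free_le[OF finite_agents])
    show "?C \<subseteq> agents n \<times> agents n" "sym ?C"
      by (auto simp: sym_def contested_pairs_def distinct_pairs_def)
    fix u v w assume "(u, v) \<in> ?C" "(v, w) \<in> ?C" "(u, w) \<in> ?C"
    then have uvw: "u \<in> agents n" "v \<in> agents n" "w \<in> agents n" "u \<noteq> v" "v \<noteq> w" "u \<noteq> w"
      and "outranked n r u v \<or> outranked n r v u" "outranked n r v w \<or> outranked n r w v"
        "outranked n r u w \<or> outranked n r w u"
      by (auto simp: contested_pairs_def distinct_pairs_def)
    moreover have impartial: "r a b = Impartial"
      if "a \<in> agents n" "b \<in> agents n" "a \<noteq> b" "outranked n r a b \<or> outranked n r b a" for a b
      using that outranked_impartial[OF assms, of a b] outranked_impartial[OF assms, of b a] rel_sym[of a b]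
      by auto
    ultimately have "r u v = Impartial" "r v w = Impartial" "r u w = Impartial"
      "r v u = Impartial" "r w v = Impartial" "r w u = Impartial"
      using impartial rel_sym by metis+
    then show False
      using no_outranked_path[of u v w] no_outranked_path[of u w v] no_outranked_path[of v u w]
        no_outranked_path[of v w u] no_outranked_path[of w u v] no_outranked_path[of w v u]
        uvw \<open>outranked n r u v \<or> outranked n r v u\<close> \<open>outranked n r v w \<or> outranked n r w v\<close>
        \<open>outranked n r u w \<or> outranked n r w u\<close>
      by blast
  qed
  then show ?thesis
    by (simp add: card_agents)
qed

lemma card_contested_pairs_le:
  assumes "3 \<le> n"
  shows "8 * card (contested_pairs n r) \<le> 5 * n\<^sup>2"
proof (cases "\<exists>a\<in>agents n. n \<le> 2 * card (friend_class n r a)")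
  case True
  then show ?thesis
    using card_contested_pairs_le_large_class[OF assms] by blast
next
  case False
  then have "2 * card (contested_pairs n r) \<le> n\<^sup>2"
    using card_contested_pairs_le_small_classes[OF assms] by force
  then show ?thesis
    by simp
qed

end


theorem proposition4:
  fixes n :: nat and q :: real and r :: "nat \<Rightarrow> nat \<Rightarrow> relation"
  assumes "n \<ge> 3" and "0 < q" and "q < 1"
    and "rel_network n r" and "structurally_balanced n r"
  shows "P_D n q r \<ge> q + q * (1 - q) * (3 * real n - 8) / (8 * (real n - 1))"
proof -
  interpret balanced_network n r
    using assms(4,5) by unfold_locales
  let ?D = "real (card (distinct_pairs n))"
  let ?S = "\<Sum>(i, j)\<in>distinct_pairs n. duple_share n r {i} i j"
  have D: "?D = real n * (real n - 1)"
    using assms(1) by (simp add: card_distinct_pairs of_nat_diff)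
  have "real (8 * card (contested_pairs n r)) \<le> real (5 * n\<^sup>2)"
    using card_contested_pairs_le[OF assms(1)] by (simp only: of_nat_le_iff)
  then have S: "?S \<ge> ?D - 5 * (real n)\<^sup>2 / 16"
    using sum_duple_share_singleton_ge[of n r] by simp
  have "P_D n q r = 2 / ?D * (q\<^sup>2 * (?D / 2) + q * (1 - q) * ?S)"
    unfolding P_D_eq_sum_distinct_pairs D
    by (simp add: split_def sum.distrib sum_duple_share_doubleton[unfolded split_def] D flip: sum_distrib_left)
  also have "\<dots> \<ge> 2 / ?D * (q\<^sup>2 * (?D / 2) + q * (1 - q) * (?D - 5 * (real n)\<^sup>2 / 16))"
    using S assms(1-3) D by (intro mult_left_mono add_left_mono mult_left_mono) auto
  moreover have "2 / ?D * (q\<^sup>2 * (?D / 2) + q * (1 - q) * (?D - 5 * (real n)\<^sup>2 / 16))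
      = q + q * (1 - q) * (3 * real n - 8) / (8 * (real n - 1))"
    using assms(1) unfolding D by (simp add: field_simps power2_eq_square)
  ultimately show ?thesis
    by simp
qed

end
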